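(* Let $n\ge2$, $\lambda_0\in\mathbb D\setminus\{0\}$ and $y^0\in\widetilde{\mathbb G}_n$. Then there exists an analytic $\psi:\mathbb D\to\widetilde\Gamma_n$ with $\psi(0)=(0,\dots,0)$ and $\psi(\lambda_0)=y^0$ if and only if there exists an analytic $\psi:\mathbb D\to\widetilde{\mathbb G}_n$ with $\psi(0)=(0,\dots,0)$ and $\psi(\lambda_0)=y^0$.
   Context: $\mathbb D$ is the open unit disc. $\widetilde{\mathbb G}_n=\{(y_1,\dots,y_{n-1},q)\in\mathbb C^n: q\in\mathbb D,\ y_j=\beta_j+\bar\beta_{n-j}q$ for some $\beta_j\in\mathbb C$ with $|\beta_j|+|\beta_{n-j}|<\binom{n}{j}$, $j=1,\dots,n-1\}$; $\widetilde\Gamma_n$ is its closure. *)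

theory Defs
  imports "HOL-Analysis.Analysis"
begin

text \<open>A point (y_1,...,y_{n-1},q) of C^n is encoded as z :: nat => complex with
  z j = y_j for 1 <= j <= n-1, z n = q, and z k = 0 for k = 0 or k > n.\<close>

definition tG :: "nat \<Rightarrow> (nat \<Rightarrow> complex) set" where
  "tG n = {z. (\<forall>k. (k = 0 \<or> k > n) \<longrightarrow> z k = 0) \<and> z n \<in> ball 0 1 \<and>
     (\<exists>\<beta> :: nat \<Rightarrow> complex. \<forall>j\<in>{1..n-1}.
        z j = \<beta> j + cnj (\<beta> (n - j)) * z n \<and>
        cmod (\<beta> j) + cmod (\<beta> (n - j)) < real (n choose j))}"

text \<open>Closure in the product topology on nat => complex; since all points of tG n
  vanish outside {1..n}, this is the Euclidean closure in C^n (zero-padded).\<close>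
definition tGamma :: "nat \<Rightarrow> (nat \<Rightarrow> complex) set" where
  "tGamma n = closure (tG n)"

definition analytic_into :: "(complex \<Rightarrow> (nat \<Rightarrow> complex)) \<Rightarrow> complex set \<Rightarrow> nat \<Rightarrow> bool" where
  "analytic_into \<psi> S n \<longleftrightarrow> (\<forall>k\<in>{1..n}. (\<lambda>w. \<psi> w k) holomorphic_on S)"

end

theory Submission
  imports Defs "HOL-Complex_Analysis.Complex_Analysis"
begin

text \<open>Every analytic disc \<psi> in \<open>tGamma n\<close> with \<psi>(0) = 0 already lies in \<open>tG n\<close>.
  A point y with \<open>|y\<^sub>n| < 1\<close> lies in \<open>tG n\<close> iff for all j and all unimodular \<omega> the pair
  \<open>((y\<^sub>j + \<omega> y\<^sub>n\<^sub>-\<^sub>j) / (n choose j), \<omega> y\<^sub>n)\<close> lies in the symmetrized bidisc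
  \<open>G\<^sub>2\<close>, and (s, p) lies in \<open>G\<^sub>2\<close> iff \<open>|(2zp - s) / (2 - zs)| < 1\<close> for all unimodular z.
  Composing \<psi> with these maps gives holomorphic maps of the disc into the closed disc
  vanishing at 0, and the Schwarz lemma puts their values in the open disc.\<close>

lemma continuous_on_coordinate [continuous_intros]: "continuous_on S (\<lambda>x. x i)"
  by (rule continuous_on_subset[OF continuous_on_product_coordinates]) simp

lemma Schwarz_Lemma_norm_less_one:
  assumes hol: "f holomorphic_on ball 0 1" and f0: "f 0 = 0"
    and le: "\<And>z. z \<in> ball 0 1 \<Longrightarrow> cmod (f z) \<le> 1" and \<xi>: "\<xi> \<in> ball 0 1"
  shows "cmod (f \<xi>) < 1"
proof -
  have "cmod (f \<xi>) \<le> cmod \<xi>"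
  proof (rule field_le_mult_one_interval)
    fix r :: real
    assume r: "0 < r" "r < 1"
    have "cmod (of_real r * f \<xi>) \<le> cmod \<xi>"
    proof (rule Schwarz_Lemma(1)[where f = "\<lambda>w. of_real r * f w"])
      show "(\<lambda>w. of_real r * f w) holomorphic_on ball 0 1"
        using hol by (intro holomorphic_intros)
      show "cmod (of_real r * f z) < 1" if "cmod z < 1" for z
      proof -
        have "r * cmod (f z) \<le> r"
          using le[of z] that r by (intro mult_left_le) auto
        moreover have "cmod (of_real r * f z) = r * cmod (f z)"
          using r by (simp add: norm_mult)
        ultimately show ?thesis
          using r by linarith
      qed
    qed (use f0 \<xi> in auto)
    then show "r * cmod (f \<xi>) \<le> cmod \<xi>"
      using r by (simp add: norm_mult)
  qed
  then show ?thesis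
    using \<xi> by simp
qed

lemma mult_cnj_eq_one: "cmod \<omega> = 1 \<Longrightarrow> \<omega> * cnj \<omega> = 1"
  by (simp add: complex_norm_square[symmetric])

lemma norm_less_of_Re_rotations_less:
  assumes "\<And>z. cmod z = 1 \<Longrightarrow> Re (z * w) < c"
  shows "cmod w < c"
proof (cases "w = 0")
  case True
  then show ?thesis using assms[of 1] by simp
next
  case False
  define z where "z = cnj w / of_real (cmod w)"
  have "cmod z = 1"
    using False by (simp add: z_def norm_divide)
  moreover have "z * w = of_real (cmod w)"
    using False by (simp add: z_def mult.commute[of _ w] complex_norm_square[symmetric] power2_eq_square)
  ultimately show ?thesis
    using assms[of z] by simp
qed

lemma norm_add_norm_less_of_rotations_less:
  assumes "\<And>\<omega>. cmod \<omega> = 1 \<Longrightarrow> cmod (a + \<omega> * b) < c"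
  shows "cmod a + cmod b < c"
proof (cases "a = 0 \<or> b = 0")
  case True
  then show ?thesis using assms[of 1] by auto
next
  case False
  define \<omega> where "\<omega> = sgn a * cnj (sgn b)"
  have "cmod \<omega> = 1"
    using False by (simp add: \<omega>_def norm_mult norm_sgn)
  moreover have "a + \<omega> * b = sgn a * of_real (cmod a + cmod b)"
    using False by (simp add: \<omega>_def sgn_div_norm scaleR_conv_of_real field_simps
        complex_norm_square[symmetric] power2_eq_square)
  then have "cmod (a + \<omega> * b) = cmod a + cmod b"
    using False by (simp only: norm_mult norm_sgn norm_of_real) simp
  ultimately show ?thesis
    using assms[of \<omega>] by simp
qed

lemma norm_less_iff_power2_less: "cmod a < cmod b \<longleftrightarrow> (cmod a)\<^sup>2 < (cmod b)\<^sup>2"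
  by (simp add: power_mono_iff flip: not_le)

text \<open>The open symmetrized bidisc \<open>{(z\<^sub>1 + z\<^sub>2, z\<^sub>1 z\<^sub>2) | z\<^sub>1 z\<^sub>2 \<in> \<bbbD>}\<close>, given by
  the Agler--Young criterion; only this description is used.\<close>

definition symm_bidisc :: "(complex \<times> complex) set" where
  "symm_bidisc = {(s, p). cmod (s - p * cnj s) < 1 - (cmod p)\<^sup>2}"

lemma symm_bidisc_norm_p:
  assumes "(s, p) \<in> symm_bidisc"
  shows "cmod p < 1"
proof -
  have "cmod (s - p * cnj s) < 1 - (cmod p)\<^sup>2"
    using assms by (simp add: symm_bidisc_def)
  then have "(cmod p)\<^sup>2 < 1"
    using norm_ge_zero[of "s - p * cnj s"] by linarith
  then show ?thesis
    by (simp add: abs_square_less_1)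
qed

lemma symm_bidisc_norm_s:
  assumes "(s, p) \<in> symm_bidisc"
  shows "cmod s < 2"
proof -
  have p: "cmod p < 1"
    using assms by (rule symm_bidisc_norm_p)
  have "cmod s * (1 - cmod p) \<le> cmod (s - p * cnj s)"
    using norm_triangle_ineq2[of s "p * cnj s"] by (simp add: norm_mult algebra_simps)
  also have "\<dots> < (1 - cmod p) * (1 + cmod p)"
    using assms by (simp add: symm_bidisc_def algebra_simps power2_eq_square)
  finally have "cmod s < 1 + cmod p"
    using p by (simp add: mult.commute)
  then show ?thesis
    using p by simp
qed

lemma symm_bidisc_param:
  assumes "cmod \<gamma> < 1" and "cmod p < 1"
  shows "(\<gamma> + cnj \<gamma> * p, p) \<in> symm_bidisc"
proof -
  have "(\<gamma> + cnj \<gamma> * p) - p * cnj (\<gamma> + cnj \<gamma> * p) = \<gamma> * of_real (1 - (cmod p)\<^sup>2)"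
    by (simp add: algebra_simps complex_norm_square[symmetric])
  moreover have "0 < 1 - (cmod p)\<^sup>2"
    using assms(2) by (simp add: abs_square_less_1)
  then have "cmod (\<gamma> * of_real (1 - (cmod p)\<^sup>2)) < 1 - (cmod p)\<^sup>2"
    using assms(1) by (simp only: norm_mult norm_of_real) simp
  ultimately show ?thesis
    by (simp add: symm_bidisc_def)
qed

lemma Moebius_identity:
  assumes "cmod z = 1"
  shows "(cmod (2 - z * s))\<^sup>2 - (cmod (2 * z * p - s))\<^sup>2
           = 4 * (1 - (cmod p)\<^sup>2 - Re (z * (s - p * cnj s)))"
proof -
  have "(Re z)\<^sup>2 + (Im z)\<^sup>2 = 1"
    using assms by (simp add: cmod_def)
  then show ?thesis
    unfolding cmod_power2 by (simp add: algebra_simps power2_eq_square) algebra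
qed

lemma symm_bidisc_iff_Moebius:
  "(s, p) \<in> symm_bidisc \<longleftrightarrow> (\<forall>z. cmod z = 1 \<longrightarrow> cmod (2 * z * p - s) < cmod (2 - z * s))"
proof -
  have Moebius_iff_Re: "cmod (2 * z * p - s) < cmod (2 - z * s)
      \<longleftrightarrow> Re (z * (s - p * cnj s)) < 1 - (cmod p)\<^sup>2" if "cmod z = 1" for z
    unfolding norm_less_iff_power2_less using Moebius_identity[OF that, of s p] by smt
  have Re_le: "Re (z * (s - p * cnj s)) \<le> cmod (s - p * cnj s)" if "cmod z = 1" for z
    using complex_Re_le_cmod[of "z * (s - p * cnj s)"] that by (simp add: norm_mult)
  show ?thesis
  proof
    assume "(s, p) \<in> symm_bidisc"
    then have "cmod (s - p * cnj s) < 1 - (cmod p)\<^sup>2"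
      by (simp add: symm_bidisc_def)
    then show "\<forall>z. cmod z = 1 \<longrightarrow> cmod (2 * z * p - s) < cmod (2 - z * s)"
      using Re_le Moebius_iff_Re by (meson le_less_trans)
  next
    assume "\<forall>z. cmod z = 1 \<longrightarrow> cmod (2 * z * p - s) < cmod (2 - z * s)"
    then have "cmod (s - p * cnj s) < 1 - (cmod p)\<^sup>2"
      using Moebius_iff_Re by (blast intro: norm_less_of_Re_rotations_less)
    then show "(s, p) \<in> symm_bidisc"
      by (simp add: symm_bidisc_def)
  qed
qed

lemma closure_symm_bidisc_norm_le:
  assumes "(s, p) \<in> closure symm_bidisc"
  shows "cmod s \<le> 2"
proof -
  have "closure symm_bidisc \<subseteq> {x. cmod (fst x) \<le> 2}"
  proof (rule closure_minimal)
    show "closed {x. cmod (fst x) \<le> 2}"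
      by (intro closed_Collect_le continuous_intros)
  qed (auto dest: symm_bidisc_norm_s)
  then show ?thesis
    using assms by auto
qed

lemma closure_symm_bidisc_Moebius_le:
  assumes "(s, p) \<in> closure symm_bidisc" and "cmod z = 1"
  shows "cmod (2 * z * p - s) \<le> cmod (2 - z * s)"
proof -
  have "closure symm_bidisc \<subseteq> {x. cmod (2 * z * snd x - fst x) \<le> cmod (2 - z * fst x)}"
  proof (rule closure_minimal)
    show "closed {x. cmod (2 * z * snd x - fst x) \<le> cmod (2 - z * fst x)}"
      by (intro closed_Collect_le continuous_intros)
  qed (use assms(2) in \<open>auto simp: symm_bidisc_iff_Moebius less_imp_le\<close>)
  then show ?thesis
    using assms(1) by auto
qed

lemma Schwarz_Lemma_symm_bidisc:
  assumes S: "S holomorphic_on ball 0 1" and P: "P holomorphic_on ball 0 1"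
    and S0: "S 0 = 0" and P0: "P 0 = 0"
    and Gamma: "\<And>w. w \<in> ball 0 1 \<Longrightarrow> (S w, P w) \<in> closure symm_bidisc"
    and \<zeta>: "\<zeta> \<in> ball 0 1"
  shows "(S \<zeta>, P \<zeta>) \<in> symm_bidisc"
  unfolding symm_bidisc_iff_Moebius
proof (intro allI impI)
  fix z :: complex
  assume z: "cmod z = 1"
  have "cmod (S w / 2) < 1" if "w \<in> ball 0 1" for w
    by (rule Schwarz_Lemma_norm_less_one[where f = "\<lambda>w. S w / 2"])
      (use S S0 Gamma closure_symm_bidisc_norm_le that in
          \<open>auto intro: holomorphic_intros simp: norm_divide\<close>)
  then have "cmod (z * S w) < 2" if "w \<in> ball 0 1" for w
    using that z by (simp add: norm_divide norm_mult)
  then have den: "2 - z * S w \<noteq> 0" if "w \<in> ball 0 1" for w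
    using that by fastforce
  define F where "F w = (2 * z * P w - S w) / (2 - z * S w)" for w
  have "cmod (F \<zeta>) < 1"
  proof (rule Schwarz_Lemma_norm_less_one[OF _ _ _ \<zeta>])
    show "F holomorphic_on ball 0 1"
      unfolding F_def using S P den by (intro holomorphic_intros) auto
    show "F 0 = 0"
      by (simp add: F_def S0 P0)
    show "cmod (F w) \<le> 1" if "w \<in> ball 0 1" for w
      using closure_symm_bidisc_Moebius_le[OF Gamma[OF that] z] den[OF that]
      by (simp add: F_def norm_divide)
  qed
  then show "cmod (2 * z * P \<zeta> - S \<zeta>) < cmod (2 - z * S \<zeta>)"
    using den[OF \<zeta>] by (simp add: F_def norm_divide)
qed

definition symm_bidisc_proj :: "nat \<Rightarrow> nat \<Rightarrow> complex \<Rightarrow> (nat \<Rightarrow> complex) \<Rightarrow> complex \<times> complex" where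
  "symm_bidisc_proj n j \<omega> y = ((y j + \<omega> * y (n - j)) / of_nat (n choose j), \<omega> * y n)"

lemma continuous_on_symm_bidisc_proj: "continuous_on S (symm_bidisc_proj n j \<omega>)"
  unfolding symm_bidisc_proj_def divide_inverse by (intro continuous_intros)

lemma symm_bidisc_proj_tG:
  assumes y: "y \<in> tG n" and j: "j \<in> {1..n-1}" and \<omega>: "cmod \<omega> = 1"
  shows "symm_bidisc_proj n j \<omega> y \<in> symm_bidisc"
proof -
  obtain \<beta> where q: "cmod (y n) < 1"
    and \<beta>: "\<forall>i\<in>{1..n-1}. y i = \<beta> i + cnj (\<beta> (n - i)) * y n \<and>
                          cmod (\<beta> i) + cmod (\<beta> (n - i)) < real (n choose i)"
    using y unfolding tG_def by auto
  have "n - j \<in> {1..n-1}" and nnj: "n - (n - j) = j"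
    using j by auto
  then have yj: "y j = \<beta> j + cnj (\<beta> (n - j)) * y n"
    and ynj: "y (n - j) = \<beta> (n - j) + cnj (\<beta> j) * y n"
    and bound: "cmod (\<beta> j) + cmod (\<beta> (n - j)) < real (n choose j)"
    using \<beta> j by (metis, metis, blast)
  define C where "C = real (n choose j)"
  have "C > 0"
    using j by (auto simp: C_def)
  define \<gamma> where "\<gamma> = (\<beta> j + \<omega> * \<beta> (n - j)) / of_real C"
  have "cmod (\<beta> j + \<omega> * \<beta> (n - j)) \<le> cmod (\<beta> j) + cmod (\<beta> (n - j))"
    using norm_triangle_ineq[of "\<beta> j" "\<omega> * \<beta> (n - j)"] \<omega> by (simp add: norm_mult)
  then have "cmod \<gamma> < 1"
    using bound \<open>C > 0\<close> by (simp add: \<gamma>_def C_def norm_divide)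
  moreover have "cmod (\<omega> * y n) < 1"
    using q \<omega> by (simp add: norm_mult)
  moreover have "(y j + \<omega> * y (n - j)) / of_nat (n choose j) = \<gamma> + cnj \<gamma> * (\<omega> * y n)"
    using \<open>C > 0\<close> mult_cnj_eq_one[OF \<omega>]
    by (simp add: yj ynj \<gamma>_def C_def field_simps)
  ultimately show ?thesis
    unfolding symm_bidisc_proj_def by (metis symm_bidisc_param)
qed

lemma tG_if_symm_bidisc_proj:
  assumes zero: "\<And>k. k = 0 \<or> n < k \<Longrightarrow> y k = 0" and q: "cmod (y n) < 1"
    and proj: "\<And>j \<omega>. j \<in> {1..n-1} \<Longrightarrow> cmod \<omega> = 1 \<Longrightarrow> symm_bidisc_proj n j \<omega> y \<in> symm_bidisc"
  shows "y \<in> tG n"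
proof -
  define D where "D = 1 - (cmod (y n))\<^sup>2"
  have "D > 0"
    using q by (simp add: D_def abs_square_less_1)
  have D: "(of_real D :: complex) = 1 - y n * cnj (y n)"
    by (simp add: D_def complex_norm_square[symmetric])
  define \<beta> where "\<beta> i = (y i - y n * cnj (y (n - i))) / of_real D" for i
  have "y j = \<beta> j + cnj (\<beta> (n - j)) * y n \<and> cmod (\<beta> j) + cmod (\<beta> (n - j)) < real (n choose j)"
    if j: "j \<in> {1..n-1}" for j
  proof
    have nnj: "n - (n - j) = j"
      using j by auto
    show "y j = \<beta> j + cnj (\<beta> (n - j)) * y n"
      using \<open>D > 0\<close> unfolding \<beta>_def nnj by (simp add: field_simps) (simp add: D algebra_simps)
    have "cmod ((y j - y n * cnj (y (n - j))) + \<omega> * (y (n - j) - y n * cnj (y j)))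
            < real (n choose j) * D" if \<omega>: "cmod \<omega> = 1" for \<omega>
    proof -
      let ?s = "(y j + \<omega> * y (n - j)) / of_nat (n choose j)"
      have C: "real (n choose j) > 0"
        using j by auto
      have "cmod (?s - \<omega> * y n * cnj ?s) < D"
        using proj[OF j \<omega>] \<omega> by (simp add: symm_bidisc_proj_def symm_bidisc_def D_def norm_mult)
      moreover have "(y j - y n * cnj (y (n - j))) + \<omega> * (y (n - j) - y n * cnj (y j))
                       = of_nat (n choose j) * (?s - \<omega> * y n * cnj ?s)"
        using C mult_cnj_eq_one[OF \<omega>] by (simp add: field_simps)
      ultimately show ?thesis
        using C by (simp add: norm_mult)
    qed
    then have "cmod (y j - y n * cnj (y (n - j))) + cmod (y (n - j) - y n * cnj (y j))
                 < real (n choose j) * D"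
      by (rule norm_add_norm_less_of_rotations_less)
    then show "cmod (\<beta> j) + cmod (\<beta> (n - j)) < real (n choose j)"
      using \<open>D > 0\<close> unfolding \<beta>_def nnj by (simp add: norm_divide field_simps)
  qed
  then show ?thesis
    using zero q unfolding tG_def by auto
qed

lemma tGamma_zero_coord:
  assumes "y \<in> tGamma n" and "k = 0 \<or> n < k"
  shows "y k = 0"
proof -
  have "tGamma n \<subseteq> {y. y k = 0}"
    unfolding tGamma_def
  proof (rule closure_minimal)
    show "closed {y :: nat \<Rightarrow> complex. y k = 0}"
      by (intro closed_Collect_eq continuous_intros)
  qed (use assms(2) in \<open>auto simp: tG_def\<close>)
  then show ?thesis
    using assms(1) by auto
qed

lemma symm_bidisc_proj_tGamma:
  assumes "y \<in> tGamma n" and "j \<in> {1..n-1}" and "cmod \<omega> = 1"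
  shows "symm_bidisc_proj n j \<omega> y \<in> closure symm_bidisc"
proof -
  have "symm_bidisc_proj n j \<omega> ` closure (tG n) \<subseteq> closure symm_bidisc"
    by (rule image_closure_subset[OF continuous_on_symm_bidisc_proj closed_closure])
      (use assms(2,3) symm_bidisc_proj_tG closure_subset in blast)
  then show ?thesis
    using assms(1) by (auto simp: tGamma_def)
qed

lemma analytic_disc_tGamma_in_tG:
  assumes n: "n \<ge> 2" and \<psi>: "analytic_into \<psi> (ball 0 1) n"
    and Gamma: "\<psi> ` ball 0 1 \<subseteq> tGamma n" and origin: "\<psi> 0 = (\<lambda>k. 0)"
  shows "\<psi> ` ball 0 1 \<subseteq> tG n"
proof clarify
  fix \<zeta> :: complex
  assume \<zeta>: "\<zeta> \<in> ball 0 1"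
  have hol: "(\<lambda>w. \<psi> w k) holomorphic_on ball 0 1" if "k \<in> {1..n}" for k
    using \<psi> that by (simp add: analytic_into_def)
  have proj: "symm_bidisc_proj n j \<omega> (\<psi> \<zeta>) \<in> symm_bidisc"
    if j: "j \<in> {1..n-1}" and \<omega>: "cmod \<omega> = 1" for j \<omega>
  proof -
    have "j \<in> {1..n}" "n - j \<in> {1..n}" "n \<in> {1..n}"
      using j by auto
    then have "(\<lambda>w. fst (symm_bidisc_proj n j \<omega> (\<psi> w))) holomorphic_on ball 0 1"
      and "(\<lambda>w. snd (symm_bidisc_proj n j \<omega> (\<psi> w))) holomorphic_on ball 0 1"
      unfolding symm_bidisc_proj_def by (auto intro!: holomorphic_intros hol)
    then show ?thesis
      using Schwarz_Lemma_symm_bidisc[OF _ _ _ _ _ \<zeta>] symm_bidisc_proj_tGamma[OF _ j \<omega>] Gamma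
      by (force simp: symm_bidisc_proj_def origin)
  qed
  show "\<psi> \<zeta> \<in> tG n"
  proof (rule tG_if_symm_bidisc_proj)
    show "\<psi> \<zeta> k = 0" if "k = 0 \<or> n < k" for k
      using tGamma_zero_coord Gamma \<zeta> that by blast
    have "symm_bidisc_proj n 1 1 (\<psi> \<zeta>) \<in> symm_bidisc"
      using n by (intro proj) auto
    then show "cmod (\<psi> \<zeta> n) < 1"
      unfolding symm_bidisc_proj_def by (auto dest: symm_bidisc_norm_p)
  qed (rule proj)
qed

theorem mainTheorem12:
  fixes n :: nat and l0 :: complex and y0 :: "nat \<Rightarrow> complex"
  assumes "n \<ge> 2" and "l0 \<in> ball 0 1" and "l0 \<noteq> 0" and "y0 \<in> tG n"
  shows "(\<exists>\<psi>. analytic_into \<psi> (ball 0 1) n \<and> \<psi> ` ball 0 1 \<subseteq> tGamma n \<and>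
            \<psi> 0 = (\<lambda>k. 0) \<and> \<psi> l0 = y0)
     \<longleftrightarrow> (\<exists>\<psi>. analytic_into \<psi> (ball 0 1) n \<and> \<psi> ` ball 0 1 \<subseteq> tG n \<and>
            \<psi> 0 = (\<lambda>k. 0) \<and> \<psi> l0 = y0)"
  using analytic_disc_tGamma_in_tG[OF assms(1)] closure_subset[of "tG n"]
  unfolding tGamma_def by blast

end
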